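(* Let $\mathcal{C}\subseteq[q]^{\tilde{n}}$ be an $(\tilde{n},k,\tilde{d})_q$ error-correcting code and $u>0$ an integer. Let $M$ be the $m\times n$ Boolean matrix, $n=q^k$, $m=\tilde{n}q^u$, constructed as follows: let $\varphi\colon[q]\to\{0,1\}^{q^u}$ map $x$ to the vector indexed by $u$-tuples $(a_1,\dots,a_u)\in[q]^u$ having a 1 at $(a_1,\dots,a_u)$ iff $a_i=x$ for some $i\in[u]$; arrange all codewords of $\mathcal{C}$ as the columns of an $\tilde{n}\times q^k$ matrix $M'$ over $[q]$ and replace each entry $x$ of $M'$ by the column $\varphi(x)$. Then $M$ is strongly $(d,e;u)$-disjunct for every $d<(\tilde{n}-e)/((\tilde{n}-\tilde{d})u)$.
   Context: An $(\tilde{n},k,\tilde{d})_q$ code is a set of $q^k$ words of length $\tilde{n}$ over an alphabet of size $q$ with minimum pairwise Hamming distance $\tilde{d}$. For a Boolean column vector $C$, $\mathrm{supp}(C)$ is the set of positions where it is 1. A Boolean matrix (with at least $d+u$ columns) is strongly $(d,e;u)$-disjunct if for every choice of $d+u$ distinct columns $C_1,\dots,C_u,C'_1,\dots,C'_d$ we have $\big|\bigcap_{i=1}^u\mathrm{supp}(C_i)\setminus\bigcup_{i=1}^d\mathrm{supp}(C'_i)\big|>e$. *)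

theory Defs
  imports Complex_Main
begin

definition words :: "nat \<Rightarrow> nat \<Rightarrow> nat list set" where
  "words q n = {w. length w = n \<and> set w \<subseteq> {..<q}}"

definition hamming :: "nat list \<Rightarrow> nat list \<Rightarrow> nat" where
  "hamming x y = card {i. i < length x \<and> x ! i \<noteq> y ! i}"

definition is_code :: "nat \<Rightarrow> nat \<Rightarrow> nat \<Rightarrow> nat \<Rightarrow> nat list set \<Rightarrow> bool" where
  "is_code q n k dd C \<longleftrightarrow> C \<subseteq> words q n \<and> card C = q ^ k \<and>
     (\<forall>c\<in>C. \<forall>c'\<in>C. c \<noteq> c' \<longrightarrow> dd \<le> hamming c c') \<and>
     (\<exists>c\<in>C. \<exists>c'\<in>C. c \<noteq> c' \<and> hamming c c' = dd)"

text \<open>Strongly (d,e;u)-disjunct: for any d+u distinct columns f 0..f (u-1) (the C_i)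
  and f u..f (u+d-1) (the C'_i), more than e rows lie in the supports of all C_i
  and in none of the supports of the C'_i.\<close>
definition strongly_disjunct ::
  "'r set \<Rightarrow> 'c set \<Rightarrow> ('r \<Rightarrow> 'c \<Rightarrow> bool) \<Rightarrow> nat \<Rightarrow> nat \<Rightarrow> nat \<Rightarrow> bool" where
  "strongly_disjunct R Cols M d e u \<longleftrightarrow>
     (\<forall>f :: nat \<Rightarrow> 'c. f ` {..<u + d} \<subseteq> Cols \<and> inj_on f {..<u + d} \<longrightarrow>
        e < card {r \<in> R. (\<forall>i<u. M r (f i)) \<and> (\<forall>i\<in>{u..<u + d}. \<not> M r (f i))})"

definition phi :: "nat \<Rightarrow> nat list \<Rightarrow> bool" where
  "phi x a \<longleftrightarrow> x \<in> set a"

text \<open>The concatenated matrix: rows are pairs (i, a) with i < n and a a u-tuple over [q]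
  (so m = n q^u rows); columns are the codewords (n = q^k columns); the entry in
  row (i,a), column c is phi (c ! i) at a.\<close>
definition concat_rows :: "nat \<Rightarrow> nat \<Rightarrow> nat \<Rightarrow> (nat \<times> nat list) set" where
  "concat_rows q n u = {..<n} \<times> words q u"

definition concat_matrix :: "(nat \<times> nat list) \<Rightarrow> nat list \<Rightarrow> bool" where
  "concat_matrix r c = phi (c ! fst r) (snd r)"

end

theory Submission
  imports Defs
begin

text \<open>Call a coordinate i separating for the columns C_1..C_u versus C'_1..C'_d if no C'_j
  agrees with any C_l in coordinate i. Each separating coordinate i gives the row
  (i, (C_1!i, ..., C_u!i)), which lies in the support of every C_l (the tuple contains C_l!i)
  and outside the support of every C'_j (the tuple avoids C'_j!i). Two distinct codewords agree
  in at most n - dt coordinates, so at most d u (n - dt) coordinates are not separating; the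
  hypothesis on d makes this less than n - e.\<close>

lemma card_agree_add_hamming:
  assumes "length x = n"
  shows "card {i. i < n \<and> x ! i = y ! i} + hamming x y = n"
proof -
  have "card {i. i < n \<and> x ! i = y ! i} + card {i. i < n \<and> x ! i \<noteq> y ! i}
      = card ({i. i < n \<and> x ! i = y ! i} \<union> {i. i < n \<and> x ! i \<noteq> y ! i})"
    by (rule card_Un_disjoint[symmetric]) auto
  also have "\<dots> = card {..<n}"
    by (rule arg_cong[where f = card]) auto
  also have "\<dots> = n"
    by simp
  finally show ?thesis
    using assms unfolding hamming_def by simp
qed

lemma hamming_le_length: "hamming x y \<le> length x"
  unfolding hamming_def by (rule card_mono[where B = "{..<length x}", simplified]) auto

lemma is_code_min_dist_le_length:
  assumes "is_code q n k dd C"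
  shows "dd \<le> n"
proof -
  obtain c c' where "c \<in> C" "hamming c c' = dd"
    using assms unfolding is_code_def by auto
  moreover have "length c = n"
    using \<open>c \<in> C\<close> assms unfolding is_code_def words_def by auto
  ultimately show ?thesis
    using hamming_le_length[of c c'] by simp
qed

text \<open>For dd = n the hypothesis reads real d < 0 (division by zero yields 0), so it is false.\<close>
lemma less_diff_of_real_bound:
  fixes n dd u d e :: nat
  assumes "dd \<le> n" "u > 0" "real d < (real n - real e) / ((real n - real dd) * real u)"
  shows "e < n - d * u * (n - dd)"
proof -
  have "dd \<noteq> n"
    using assms(3) by auto
  with assms have "real d * real u * (real n - real dd) < real n - real e"
    by (simp add: pos_less_divide_eq mult.commute mult.left_commute)
  also have "real d * real u * (real n - real dd) = real (d * u * (n - dd))"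
    using assms(1) by (simp add: of_nat_diff)
  finally show ?thesis
    by linarith
qed

definition separating_positions :: "nat \<Rightarrow> ('i \<Rightarrow> 'a list) \<Rightarrow> 'i set \<Rightarrow> 'i set \<Rightarrow> nat set" where
  "separating_positions n w J L = {i. i < n \<and> (\<forall>j\<in>J. \<forall>l\<in>L. w j ! i \<noteq> w l ! i)}"

lemma card_separating_positions_ge:
  assumes "finite J" "finite L"
    and len: "\<And>j. j \<in> J \<Longrightarrow> length (w j) = n"
    and dist: "\<And>j l. j \<in> J \<Longrightarrow> l \<in> L \<Longrightarrow> dd \<le> hamming (w j) (w l)"
  shows "n - card J * card L * (n - dd) \<le> card (separating_positions n w J L)"
proof -
  define agree where "agree = (\<lambda>(j, l). {i. i < n \<and> w j ! i = w l ! i})"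
  have card_agree: "card (agree p) \<le> n - dd" if "p \<in> J \<times> L" for p
    using that card_agree_add_hamming[OF len, of _ "w (snd p)"] dist
    unfolding agree_def by (fastforce split: prod.splits)
  have "{..<n} - separating_positions n w J L \<subseteq> (\<Union>p\<in>J \<times> L. agree p)"
    unfolding separating_positions_def agree_def by auto
  then have "card ({..<n} - separating_positions n w J L) \<le> card (\<Union>p\<in>J \<times> L. agree p)"
    by (rule card_mono[rotated]) (auto simp: agree_def assms)
  also have "\<dots> \<le> (\<Sum>p\<in>J \<times> L. card (agree p))"
    by (rule card_UN_le) (simp add: assms)
  also have "\<dots> \<le> (\<Sum>p\<in>J \<times> L. n - dd)"
    by (rule sum_mono) (rule card_agree)
  also have "\<dots> = card J * card L * (n - dd)"
    by (simp add: card_cartesian_product)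
  finally show ?thesis
    by (subst (asm) card_Diff_subset) (auto simp: separating_positions_def)
qed

lemma finite_concat_rows: "finite (concat_rows q n u)"
proof -
  have "words q u = {xs. set xs \<subseteq> {..<q} \<and> length xs = u}"
    unfolding words_def by auto
  then show ?thesis
    unfolding concat_rows_def by (simp add: finite_lists_length_eq)
qed

lemma card_separating_positions_le_disjunct_rows:
  assumes words: "\<And>l. l < u \<Longrightarrow> f l \<in> words q n"
  shows "card (separating_positions n f {u..<u + d} {..<u})
    \<le> card {r \<in> concat_rows q n u. (\<forall>i<u. concat_matrix r (f i)) \<and>
                                 (\<forall>i\<in>{u..<u + d}. \<not> concat_matrix r (f i))}"
    (is "card ?G \<le> card ?S")
proof -
  let ?row = "\<lambda>i. (i, map (\<lambda>l. f l ! i) [0..<u])"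
  have "?row i \<in> ?S" if i: "i \<in> ?G" for i
  proof -
    have "f l ! i < q" if "l < u" for l
      using words[OF that] i unfolding words_def separating_positions_def by (auto dest!: nth_mem)
    then have "?row i \<in> concat_rows q n u"
      using i unfolding concat_rows_def words_def separating_positions_def by auto
    moreover have "concat_matrix (?row i) (f l)" if "l < u" for l
      using that unfolding concat_matrix_def phi_def by auto
    moreover have "\<not> concat_matrix (?row i) (f j)" if "j \<in> {u..<u + d}" for j
      using i that unfolding concat_matrix_def phi_def separating_positions_def by auto
    ultimately show ?thesis
      by blast
  qed
  then have "?row ` ?G \<subseteq> ?S"
    by blast
  moreover have "inj_on ?row ?G"
    by (auto intro: inj_onI)
  moreover have "finite ?S"
    using finite_concat_rows by simp
  ultimately show ?thesis
    by (intro card_inj_on_le)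
qed

theorem mainTheorem13:
  fixes q nt k dt u d e :: nat and C :: "nat list set"
  assumes "is_code q nt k dt C"
    and "u > 0"
    and "real d < (real nt - real e) / ((real nt - real dt) * real u)"
  shows "strongly_disjunct (concat_rows q nt u) C concat_matrix d e u"
  unfolding strongly_disjunct_def
proof (intro allI impI)
  fix f :: "nat \<Rightarrow> nat list"
  assume f: "f ` {..<u + d} \<subseteq> C \<and> inj_on f {..<u + d}"
  have code: "C \<subseteq> words q nt"
    "\<And>c c'. c \<in> C \<Longrightarrow> c' \<in> C \<Longrightarrow> c \<noteq> c' \<Longrightarrow> dt \<le> hamming c c'"
    using assms(1) unfolding is_code_def by auto
  have "e < nt - d * u * (nt - dt)"
    using is_code_min_dist_le_length[OF assms(1)] assms(2,3) by (rule less_diff_of_real_bound)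
  also have "\<dots> = nt - card {u..<u + d} * card {..<u} * (nt - dt)"
    by simp
  also have "\<dots> \<le> card (separating_positions nt f {u..<u + d} {..<u})"
  proof (rule card_separating_positions_ge)
    show "length (f j) = nt" if "j \<in> {u..<u + d}" for j
      using that f code(1) unfolding words_def by auto
    show "dt \<le> hamming (f j) (f l)" if "j \<in> {u..<u + d}" "l \<in> {..<u}" for j l
    proof (rule code(2))
      show "f j \<in> C" "f l \<in> C"
        using that f by auto
      show "f j \<noteq> f l"
        using that f by (auto dest: inj_onD)
    qed
  qed simp_all
  also have "\<dots> \<le> card {r \<in> concat_rows q nt u. (\<forall>i<u. concat_matrix r (f i)) \<and>
                                   (\<forall>i\<in>{u..<u + d}. \<not> concat_matrix r (f i))}"
    using f code(1) by (intro card_separating_positions_le_disjunct_rows) force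
  finally show "e < \<dots>" .
qed

end
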